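(* Let $\mathcal{X}\subseteq\mathbb{R}^d$ be a nonempty closed convex bounded set with $R\ge\max_{x,y\in\mathcal{X}}\|x-y\|$, and consider the iterates $x_t,z_t$ and step sizes $\gamma_t$ of Algorithm AdaPEG (described in the context) run with arbitrary oracle answers $\widehat{F(x_t)}\in\mathbb{R}^d$. Then for all $y\in\mathcal{X}$, \[\sum_{t=1}^T\langle\widehat{F(x_t)},x_t-y\rangle\le\frac12R^2\gamma_0+\left(\frac12\frac{R^2}{\eta}+2\eta\right)\sqrt{\sum_{t=1}^T\left\|\widehat{F(x_t)}-\widehat{F(x_{t-1})}\right\|^2}-\frac12\sum_{t=1}^T\gamma_{t-1}\left(\|x_t-z_{t-1}\|^2+\|x_{t-1}-z_{t-1}\|^2\right).\]
   Context: $\|\cdot\|$ is the Euclidean norm. Algorithm AdaPEG: $x_0=z_0\in\mathcal{X}$, $\gamma_0\ge0$, $\eta>0$. For $t=1,\dots,T$: $x_t=\arg\min_{u\in\mathcal{X}}\{\langle\widehat{F(x_{t-1})},u\rangle+\tfrac12\gamma_{t-1}\|u-z_{t-1}\|^2\}$; $\gamma_t=\frac1\eta\sqrt{\eta^2\gamma_0^2+\sum_{s=1}^t\|\widehat{F(x_s)}-\widehat{F(x_{s-1})}\|^2}$; $z_t=\arg\min_{u\in\mathcal{X}}\{\langle\widehat{F(x_t)},u\rangle+\tfrac12\gamma_{t-1}\|u-z_{t-1}\|^2+\tfrac12(\gamma_t-\gamma_{t-1})\|u-x_t\|^2\}$. *)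

theory Defs
  imports "HOL-Analysis.Analysis"
begin

text \<open>Step size of AdaPEG. The oracle answers are a sequence g, where g t stands for
the (arbitrary) oracle answer at x_t.\<close>
definition adapeg_gamma :: "real \<Rightarrow> real \<Rightarrow> (nat \<Rightarrow> real ^ 'd) \<Rightarrow> nat \<Rightarrow> real" where
  "adapeg_gamma \<gamma>0 \<eta> g t =
     (1 / \<eta>) * sqrt (\<eta>\<^sup>2 * \<gamma>0\<^sup>2 + (\<Sum>s\<in>{1..t}. (norm (g s - g (s - 1)))\<^sup>2))"

definition is_minimizer_on :: "'a set \<Rightarrow> ('a \<Rightarrow> real) \<Rightarrow> 'a \<Rightarrow> bool" where
  "is_minimizer_on X phi u \<longleftrightarrow> u \<in> X \<and> (\<forall>v\<in>X. phi u \<le> phi v)"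

definition adapeg_iterates ::
  "(real ^ 'd) set \<Rightarrow> real \<Rightarrow> real \<Rightarrow> nat \<Rightarrow> (nat \<Rightarrow> real ^ 'd) \<Rightarrow> (nat \<Rightarrow> real ^ 'd)
     \<Rightarrow> (nat \<Rightarrow> real ^ 'd) \<Rightarrow> bool" where
  "adapeg_iterates X \<gamma>0 \<eta> T g x z \<longleftrightarrow>
     x 0 \<in> X \<and> z 0 = x 0 \<and>
     (\<forall>t\<in>{1..T}.
        is_minimizer_on X
          (\<lambda>u. inner (g (t - 1)) u + (1/2) * adapeg_gamma \<gamma>0 \<eta> g (t - 1) * (norm (u - z (t - 1)))\<^sup>2)
          (x t) \<and>
        is_minimizer_on X
          (\<lambda>u. inner (g t) u + (1/2) * adapeg_gamma \<gamma>0 \<eta> g (t - 1) * (norm (u - z (t - 1)))\<^sup>2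
               + (1/2) * (adapeg_gamma \<gamma>0 \<eta> g t - adapeg_gamma \<gamma>0 \<eta> g (t - 1)) * (norm (u - x t))\<^sup>2)
          (z t))"

end

theory Submission
  imports Defs
begin

text \<open>Testing the first-order
  optimality conditions of the two argmins at z_t, at y and at x_t gives a one-round bound:
  the regret term <g_t, x_t - y> is at most the decrease of the potential
  \<Gamma>_t/2 (|y - z_t|^2 + |x_t - z_t|^2), plus (\<Gamma>_t - \<Gamma>_(t-1))/2 R^2 for the growth
  of the step size, plus the prediction error P_t = <g_t - g_(t-1), x_t - z_t>, minus the
  squared step lengths. The same conditions give
  \<Gamma>_t |x_t - z_t|^2 \<le> P_t \<le> e_t |x_t - z_t| with e_t = |g_t - g_(t-1)|, hence
  P_t \<le> e_t^2 / \<Gamma>_t \<le> 2 \<eta> (sqrt S_t - sqrt S_(t-1)) for S_t = e_1^2 + ... + e_t^2.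
  Summing over the rounds everything telescopes, and \<Gamma>_T \<le> \<gamma>_0 + sqrt S_T / \<eta>
  bounds what is left.\<close>

lemma nonneg_of_nonneg_near_zero:
  fixes L M :: real
  assumes "\<And>s. 0 < s \<Longrightarrow> s \<le> 1 \<Longrightarrow> 0 \<le> s * L + s\<^sup>2 * M"
  shows "0 \<le> L"
proof (rule tendsto_lowerbound)
  show "((\<lambda>s. L + s * M) \<longlongrightarrow> L) (at_right 0)"
    by (auto intro!: tendsto_eq_intros)
  have "0 \<le> L + s * M" if "0 < s" "s < 1" for s
  proof -
    have "0 \<le> s * (L + s * M)"
      using assms[of s] that by (simp add: power2_eq_square algebra_simps)
    with \<open>0 < s\<close> show ?thesis by (simp add: zero_le_mult_iff)
  qed
  then show "\<forall>\<^sub>F s in at_right 0. 0 \<le> L + s * M"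
    unfolding eventually_at_right_field by (intro exI[of _ 1]) auto
qed simp

lemma quadratic_along_segment:
  fixes c u d p q :: "'a::real_inner"
  shows "inner c (u + s *\<^sub>R d) + (1/2) * a * (norm (u + s *\<^sub>R d - p))\<^sup>2
      + (1/2) * b * (norm (u + s *\<^sub>R d - q))\<^sup>2
    = inner c u + (1/2) * a * (norm (u - p))\<^sup>2 + (1/2) * b * (norm (u - q))\<^sup>2
      + s * inner (c + a *\<^sub>R (u - p) + b *\<^sub>R (u - q)) d + s\<^sup>2 * ((a + b) / 2 * (norm d)\<^sup>2)"
  unfolding power2_norm_eq_inner
  by (simp add: inner_add_left inner_add_right inner_diff_left inner_diff_right algebra_simps
      power2_eq_square inner_commute)

lemma is_minimizer_on_quadratic_first_order:
  fixes c p q :: "'a::real_inner"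
  assumes "convex X"
    and "is_minimizer_on X
      (\<lambda>w. inner c w + (1/2) * a * (norm (w - p))\<^sup>2 + (1/2) * b * (norm (w - q))\<^sup>2) u"
    and "v \<in> X"
  shows "0 \<le> inner (c + a *\<^sub>R (u - p) + b *\<^sub>R (u - q)) (v - u)"
proof (rule nonneg_of_nonneg_near_zero)
  fix s :: real assume s: "0 < s" "s \<le> 1"
  have "u \<in> X" using assms(2) by (simp add: is_minimizer_on_def)
  have "u + s *\<^sub>R (v - u) = (1 - s) *\<^sub>R u + s *\<^sub>R v" by (simp add: algebra_simps)
  with \<open>u \<in> X\<close> have "u + s *\<^sub>R (v - u) \<in> X"
    using assms(1,3) s by (simp add: convex_def)
  with assms(2) have "inner c u + (1/2) * a * (norm (u - p))\<^sup>2 + (1/2) * b * (norm (u - q))\<^sup>2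
      \<le> inner c (u + s *\<^sub>R (v - u)) + (1/2) * a * (norm (u + s *\<^sub>R (v - u) - p))\<^sup>2
        + (1/2) * b * (norm (u + s *\<^sub>R (v - u) - q))\<^sup>2"
    unfolding is_minimizer_on_def by blast
  then show "0 \<le> s * inner (c + a *\<^sub>R (u - p) + b *\<^sub>R (u - q)) (v - u)
      + s\<^sup>2 * ((a + b) / 2 * (norm (v - u))\<^sup>2)"
    unfolding quadratic_along_segment by linarith
qed

lemma optimistic_step_regret:
  fixes gp gc xc zc zp y :: "'a::real_inner"
  assumes "0 \<le> inner (gp + a *\<^sub>R (xc - zp)) (zc - xc)"
    and "0 \<le> inner (gc + a *\<^sub>R (zc - zp) + (b - a) *\<^sub>R (zc - xc)) (y - zc)"
  shows "inner gc (xc - y) \<le> inner (gc - gp) (xc - zc)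
     + a/2 * (norm (y - zp))\<^sup>2 - b/2 * (norm (y - zc))\<^sup>2 + (b - a)/2 * (norm (y - xc))\<^sup>2
     - a/2 * (norm (xc - zp))\<^sup>2 - b/2 * (norm (xc - zc))\<^sup>2"
proof -
  have "inner (gc - gp) (xc - zc)
     + a/2 * (norm (y - zp))\<^sup>2 - b/2 * (norm (y - zc))\<^sup>2 + (b - a)/2 * (norm (y - xc))\<^sup>2
     - a/2 * (norm (xc - zp))\<^sup>2 - b/2 * (norm (xc - zc))\<^sup>2 - inner gc (xc - y)
     = inner (gp + a *\<^sub>R (xc - zp)) (zc - xc)
       + inner (gc + a *\<^sub>R (zc - zp) + (b - a) *\<^sub>R (zc - xc)) (y - zc)"
    unfolding power2_norm_eq_inner
    by (simp add: inner_add_left inner_add_right inner_diff_left inner_diff_right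
        algebra_simps inner_commute) (simp add: field_simps)
  with assms show ?thesis by linarith
qed

lemma optimistic_step_gap:
  fixes gp gc xc zc zp :: "'a::real_inner"
  assumes "0 \<le> inner (gp + a *\<^sub>R (xc - zp)) (zc - xc)"
    and "0 \<le> inner (gc + a *\<^sub>R (zc - zp) + (b - a) *\<^sub>R (zc - xc)) (xc - zc)"
  shows "b * (norm (xc - zc))\<^sup>2 \<le> inner (gc - gp) (xc - zc)"
proof -
  have "inner (gc - gp) (xc - zc) - b * (norm (xc - zc))\<^sup>2
     = inner (gp + a *\<^sub>R (xc - zp)) (zc - xc)
       + inner (gc + a *\<^sub>R (zc - zp) + (b - a) *\<^sub>R (zc - xc)) (xc - zc)"
    unfolding power2_norm_eq_inner
    by (simp add: inner_add_left inner_add_right inner_diff_left inner_diff_right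
        algebra_simps inner_commute)
  with assms show ?thesis by linarith
qed

lemma le_sq_div_of_quadratic_le_linear:
  fixes P b e n :: real
  assumes "b * n\<^sup>2 \<le> P" and "P \<le> e * n" and "0 < b" and "0 \<le> n" and "0 \<le> e"
  shows "P \<le> e\<^sup>2 / b"
proof (cases "n = 0")
  case True
  with assms show ?thesis by simp
next
  case False
  with assms have "0 < n" by simp
  have "(b * n) * n \<le> e * n"
    using assms(1,2) by (simp add: power2_eq_square mult.assoc)
  with \<open>0 < n\<close> have "b * n \<le> e" by simp
  with \<open>0 < b\<close> have "n \<le> e / b" by (simp add: le_divide_eq mult.commute)
  with assms(2,5) have "P \<le> e * (e / b)" by (meson mult_left_mono order_trans)
  then show ?thesis by (simp add: power2_eq_square)
qed

lemma sq_div_sqrt_le_sqrt_diff: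
  fixes S e :: real
  assumes "0 \<le> S"
  shows "e\<^sup>2 / sqrt (S + e\<^sup>2) \<le> 2 * (sqrt (S + e\<^sup>2) - sqrt S)"
proof (cases "e = 0")
  case True
  then show ?thesis by simp
next
  case False
  then have pos: "0 < sqrt (S + e\<^sup>2)" using assms by (simp add: add_nonneg_pos)
  have mono: "sqrt S \<le> sqrt (S + e\<^sup>2)" by simp
  have "e\<^sup>2 = (sqrt (S + e\<^sup>2) - sqrt S) * (sqrt (S + e\<^sup>2) + sqrt S)"
    using assms by (simp add: algebra_simps power2_eq_square[symmetric])
  also have "\<dots> \<le> (sqrt (S + e\<^sup>2) - sqrt S) * (2 * sqrt (S + e\<^sup>2))"
    using mono by (intro mult_left_mono) auto
  finally have "e\<^sup>2 \<le> 2 * (sqrt (S + e\<^sup>2) - sqrt S) * sqrt (S + e\<^sup>2)"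
    by (simp add: algebra_simps)
  then show ?thesis by (rule pos_divide_le_eq[OF pos, THEN iffD2])
qed

lemma adaptive_step_bound:
  fixes P b e n S \<eta> :: real
  assumes "b * n\<^sup>2 \<le> P" and "P \<le> e * n" and "0 \<le> n" and "0 \<le> e"
    and "sqrt (S + e\<^sup>2) \<le> \<eta> * b" and "0 \<le> S" and "0 < \<eta>"
  shows "P \<le> 2 * \<eta> * (sqrt (S + e\<^sup>2) - sqrt S)"
proof (cases "e = 0")
  case True
  with assms show ?thesis by simp
next
  case False
  then have pos: "0 < sqrt (S + e\<^sup>2)" using assms by (simp add: add_nonneg_pos)
  with assms have "0 < \<eta> * b" by linarith
  with assms have "0 < b" by (simp add: zero_less_mult_iff)
  with assms have "P \<le> e\<^sup>2 / b" by (intro le_sq_div_of_quadratic_le_linear)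
  also have "\<dots> \<le> e\<^sup>2 / (sqrt (S + e\<^sup>2) / \<eta>)"
    using assms pos \<open>0 < b\<close> by (intro divide_left_mono) (auto simp: divide_le_eq mult.commute)
  also have "\<dots> = \<eta> * (e\<^sup>2 / sqrt (S + e\<^sup>2))" by simp
  also have "\<dots> \<le> \<eta> * (2 * (sqrt (S + e\<^sup>2) - sqrt S))"
    using assms by (intro mult_left_mono sq_div_sqrt_le_sqrt_diff) auto
  finally show ?thesis by (simp add: algebra_simps)
qed

lemma sum_le_telescope:
  fixes a \<Phi> :: "nat \<Rightarrow> 'a::ordered_ab_group_add"
  assumes "\<And>t. t \<in> {1..n} \<Longrightarrow> a t \<le> \<Phi> (t - 1) - \<Phi> t"
  shows "(\<Sum>t\<in>{1..n}. a t) \<le> \<Phi> 0 - \<Phi> n"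
  using assms
proof (induction n)
  case (Suc n)
  have "(\<Sum>t\<in>{1..n}. a t) \<le> \<Phi> 0 - \<Phi> n" using Suc by simp
  moreover have "a (Suc n) \<le> \<Phi> n - \<Phi> (Suc n)" using Suc.prems[of "Suc n"] by simp
  ultimately show ?case by (simp add: add_mono[THEN order_trans])
qed simp

definition sq_variation :: "(nat \<Rightarrow> 'a::real_normed_vector) \<Rightarrow> nat \<Rightarrow> real" where
  "sq_variation g t = (\<Sum>s\<in>{1..t}. (norm (g s - g (s - 1)))\<^sup>2)"

lemma sq_variation_0 [simp]: "sq_variation g 0 = 0"
  by (simp add: sq_variation_def)

lemma sq_variation_Suc: "sq_variation g (Suc t) = sq_variation g t + (norm (g (Suc t) - g t))\<^sup>2"
  by (simp add: sq_variation_def)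

lemma sq_variation_nonneg: "0 \<le> sq_variation g t"
  by (simp add: sq_variation_def sum_nonneg)

lemma adapeg_gamma_eq:
  "adapeg_gamma \<gamma>0 \<eta> g t = sqrt (\<eta>\<^sup>2 * \<gamma>0\<^sup>2 + sq_variation g t) / \<eta>"
  by (simp add: adapeg_gamma_def sq_variation_def)

lemma adapeg_gamma_nonneg:
  assumes "0 < \<eta>"
  shows "0 \<le> adapeg_gamma \<gamma>0 \<eta> g t"
  unfolding adapeg_gamma_eq using assms
  by (intro divide_nonneg_pos real_sqrt_ge_zero add_nonneg_nonneg sq_variation_nonneg) auto

lemma adapeg_gamma_le_Suc:
  assumes "0 < \<eta>"
  shows "adapeg_gamma \<gamma>0 \<eta> g t \<le> adapeg_gamma \<gamma>0 \<eta> g (Suc t)"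
  using assms by (simp add: adapeg_gamma_eq sq_variation_Suc divide_right_mono)

lemma sqrt_sq_variation_le_adapeg_gamma:
  assumes "0 < \<eta>"
  shows "sqrt (sq_variation g t) \<le> \<eta> * adapeg_gamma \<gamma>0 \<eta> g t"
  using assms by (simp add: adapeg_gamma_eq)

lemma adapeg_gamma_le:
  assumes "0 \<le> \<gamma>0" and "0 < \<eta>"
  shows "adapeg_gamma \<gamma>0 \<eta> g t \<le> \<gamma>0 + sqrt (sq_variation g t) / \<eta>"
proof -
  have "sqrt (\<eta>\<^sup>2 * \<gamma>0\<^sup>2 + sq_variation g t) \<le> \<eta> * \<gamma>0 + sqrt (sq_variation g t)"
    using sqrt_add_le_add_sqrt[of "\<eta>\<^sup>2 * \<gamma>0\<^sup>2" "sq_variation g t"] assms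
    by (simp add: sq_variation_nonneg real_sqrt_mult)
  then have "adapeg_gamma \<gamma>0 \<eta> g t \<le> (\<eta> * \<gamma>0 + sqrt (sq_variation g t)) / \<eta>"
    using assms by (simp add: adapeg_gamma_eq divide_right_mono)
  with assms show ?thesis by (simp add: add_divide_distrib)
qed

locale adapeg_run =
  fixes X :: "(real ^ 'd) set" and R \<gamma>0 \<eta> :: real and T :: nat and g x z :: "nat \<Rightarrow> real ^ 'd"
  assumes convex: "convex X"
    and diameter: "\<forall>a\<in>X. \<forall>b\<in>X. norm (a - b) \<le> R"
    and gamma0_nonneg: "0 \<le> \<gamma>0"
    and eta_pos: "0 < \<eta>"
    and iterates: "adapeg_iterates X \<gamma>0 \<eta> T g x z"
begin

abbreviation \<Gamma> :: "nat \<Rightarrow> real" where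
  "\<Gamma> \<equiv> adapeg_gamma \<gamma>0 \<eta> g"

lemma diameter_sq:
  assumes "a \<in> X" and "b \<in> X"
  shows "(norm (a - b))\<^sup>2 \<le> R\<^sup>2"
  using diameter assms by (simp add: power_mono)

lemma z_0: "z 0 = x 0"
  using iterates by (simp add: adapeg_iterates_def)

lemma x_step:
  assumes "t \<in> {1..T}"
  shows "is_minimizer_on X
    (\<lambda>u. inner (g (t - 1)) u + (1/2) * \<Gamma> (t - 1) * (norm (u - z (t - 1)))\<^sup>2) (x t)"
  using iterates assms by (simp add: adapeg_iterates_def)

lemma z_step:
  assumes "t \<in> {1..T}"
  shows "is_minimizer_on X
    (\<lambda>u. inner (g t) u + (1/2) * \<Gamma> (t - 1) * (norm (u - z (t - 1)))\<^sup>2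
         + (1/2) * (\<Gamma> t - \<Gamma> (t - 1)) * (norm (u - x t))\<^sup>2) (z t)"
  using iterates assms by (simp add: adapeg_iterates_def)

lemma iterates_in:
  assumes "t \<le> T"
  shows "x t \<in> X" and "z t \<in> X"
proof -
  have "x t \<in> X \<and> z t \<in> X"
  proof (cases "t = 0")
    case True
    with iterates show ?thesis by (simp add: adapeg_iterates_def)
  next
    case False
    with assms x_step[of t] z_step[of t] show ?thesis by (simp add: is_minimizer_on_def)
  qed
  then show "x t \<in> X" and "z t \<in> X" by simp_all
qed

lemma x_first_order:
  assumes "t \<in> {1..T}" and "v \<in> X"
  shows "0 \<le> inner (g (t - 1) + \<Gamma> (t - 1) *\<^sub>R (x t - z (t - 1))) (v - x t)"
proof -
  have "is_minimizer_on X
    (\<lambda>u. inner (g (t - 1)) u + (1/2) * \<Gamma> (t - 1) * (norm (u - z (t - 1)))\<^sup>2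
         + (1/2) * 0 * (norm (u - z (t - 1)))\<^sup>2) (x t)"
    using x_step[OF assms(1)] by simp
  from is_minimizer_on_quadratic_first_order[OF convex this assms(2)] show ?thesis by simp
qed

lemma z_first_order:
  assumes "t \<in> {1..T}" and "v \<in> X"
  shows "0 \<le> inner (g t + \<Gamma> (t - 1) *\<^sub>R (z t - z (t - 1)) + (\<Gamma> t - \<Gamma> (t - 1)) *\<^sub>R (z t - x t))
    (v - z t)"
  using is_minimizer_on_quadratic_first_order[OF convex z_step[OF assms(1)] assms(2)] .

definition potential :: "real ^ 'd \<Rightarrow> nat \<Rightarrow> real" where
  "potential y t = \<Gamma> t / 2 * ((norm (y - z t))\<^sup>2 + (norm (x t - z t))\<^sup>2 - R\<^sup>2)
     - 2 * \<eta> * sqrt (sq_variation g t)"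

lemma prediction_error_le:
  assumes "Suc n \<in> {1..T}"
  shows "inner (g (Suc n) - g n) (x (Suc n) - z (Suc n))
    \<le> 2 * \<eta> * (sqrt (sq_variation g (Suc n)) - sqrt (sq_variation g n))"
proof -
  have "Suc n \<le> T" using assms by simp
  have "\<Gamma> (Suc n) * (norm (x (Suc n) - z (Suc n)))\<^sup>2
    \<le> inner (g (Suc n) - g n) (x (Suc n) - z (Suc n))"
    using optimistic_step_gap[OF x_first_order[OF assms iterates_in(2)[OF \<open>Suc n \<le> T\<close>]]
        z_first_order[OF assms iterates_in(1)[OF \<open>Suc n \<le> T\<close>]]]
    by simp
  moreover have "sqrt (sq_variation g (Suc n)) \<le> \<eta> * \<Gamma> (Suc n)"
    by (rule sqrt_sq_variation_le_adapeg_gamma[OF eta_pos])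
  ultimately show ?thesis
    using adaptive_step_bound[OF _ norm_cauchy_schwarz norm_ge_zero norm_ge_zero _
        sq_variation_nonneg eta_pos]
    by (simp add: sq_variation_Suc)
qed

lemma potential_decrease:
  assumes "t \<in> {1..T}" and "y \<in> X"
  shows "inner (g t) (x t - y)
      + (1/2) * (\<Gamma> (t - 1) * ((norm (x t - z (t - 1)))\<^sup>2 + (norm (x (t - 1) - z (t - 1)))\<^sup>2))
    \<le> potential y (t - 1) - potential y t"
proof -
  obtain n where t: "t = Suc n" using assms(1) by (cases t) auto
  then have n: "t - 1 = n" by simp
  have "t \<le> T" using assms(1) by simp
  have regret: "inner (g t) (x t - y) \<le> inner (g t - g n) (x t - z t)
     + \<Gamma> n/2 * (norm (y - z n))\<^sup>2 - \<Gamma> t/2 * (norm (y - z t))\<^sup>2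
     + (\<Gamma> t - \<Gamma> n)/2 * (norm (y - x t))\<^sup>2
     - \<Gamma> n/2 * (norm (x t - z n))\<^sup>2 - \<Gamma> t/2 * (norm (x t - z t))\<^sup>2"
    using optimistic_step_regret[OF x_first_order[OF assms(1) iterates_in(2)[OF \<open>t \<le> T\<close>]]
        z_first_order[OF assms]]
    unfolding n .
  have prediction: "inner (g t - g n) (x t - z t)
      \<le> 2 * \<eta> * (sqrt (sq_variation g t) - sqrt (sq_variation g n))"
    using prediction_error_le assms(1) by (simp add: t)
  have "(norm (y - x t))\<^sup>2 \<le> R\<^sup>2"
    using diameter_sq assms(2) iterates_in(1)[OF \<open>t \<le> T\<close>] by blast
  moreover have "\<Gamma> n \<le> \<Gamma> t"
    unfolding t by (rule adapeg_gamma_le_Suc[OF eta_pos])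
  ultimately have "(\<Gamma> t - \<Gamma> n)/2 * (norm (y - x t))\<^sup>2 \<le> (\<Gamma> t - \<Gamma> n)/2 * R\<^sup>2"
    by (intro mult_left_mono) auto
  then show ?thesis
    using regret prediction unfolding n potential_def by (simp add: field_simps)
qed

lemma potential_0_nonpos:
  assumes "y \<in> X"
  shows "potential y 0 \<le> 0"
proof -
  have "(norm (y - x 0))\<^sup>2 \<le> R\<^sup>2"
    using diameter_sq assms iterates_in(1)[of 0] by blast
  then show ?thesis
    using adapeg_gamma_nonneg[OF eta_pos, of \<gamma>0 g 0]
    by (simp add: potential_def z_0 mult_nonneg_nonpos)
qed

lemma neg_potential_le:
  "- potential y T \<le> (1/2) * R\<^sup>2 * \<gamma>0 + ((1/2) * R\<^sup>2 / \<eta> + 2 * \<eta>) * sqrt (sq_variation g T)"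
proof -
  have "- potential y T \<le> \<Gamma> T / 2 * R\<^sup>2 + 2 * \<eta> * sqrt (sq_variation g T)"
    using adapeg_gamma_nonneg[OF eta_pos, of \<gamma>0 g T]
    by (simp add: potential_def algebra_simps)
  also have "\<dots> \<le> (\<gamma>0 + sqrt (sq_variation g T) / \<eta>) / 2 * R\<^sup>2
      + 2 * \<eta> * sqrt (sq_variation g T)"
    using adapeg_gamma_le[OF gamma0_nonneg eta_pos]
    by (intro add_right_mono mult_right_mono divide_right_mono) auto
  also have "\<dots> = (1/2) * R\<^sup>2 * \<gamma>0 + ((1/2) * R\<^sup>2 / \<eta> + 2 * \<eta>) * sqrt (sq_variation g T)"
    using eta_pos by (simp add: field_simps)
  finally show ?thesis .
qed

end

theorem lemmaB5:
  fixes X :: "(real ^ 'd) set" and R \<gamma>0 \<eta> :: real and T :: nat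
    and g x z :: "nat \<Rightarrow> real ^ 'd" and y :: "real ^ 'd"
  assumes "X \<noteq> {}" and "closed X" and "convex X" and "bounded X"
    and "\<forall>a\<in>X. \<forall>b\<in>X. norm (a - b) \<le> R"
    and "\<gamma>0 \<ge> 0" and "\<eta> > 0"
    and "adapeg_iterates X \<gamma>0 \<eta> T g x z"
    and "y \<in> X"
  shows "(\<Sum>t\<in>{1..T}. inner (g t) (x t - y))
     \<le> (1/2) * R\<^sup>2 * \<gamma>0
       + ((1/2) * R\<^sup>2 / \<eta> + 2 * \<eta>) * sqrt (\<Sum>t\<in>{1..T}. (norm (g t - g (t - 1)))\<^sup>2)
       - (1/2) * (\<Sum>t\<in>{1..T}. adapeg_gamma \<gamma>0 \<eta> g (t - 1)
            * ((norm (x t - z (t - 1)))\<^sup>2 + (norm (x (t - 1) - z (t - 1)))\<^sup>2))"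
proof -
  \<comment> \<open>Nonemptiness, closedness and boundedness of X only serve to make the argmins
    exist; here the iterates are given.\<close>
  interpret adapeg_run X R \<gamma>0 \<eta> T g x z
    using assms(3,5-8) by unfold_locales
  have "(\<Sum>t\<in>{1..T}. inner (g t) (x t - y)
      + (1/2) * (\<Gamma> (t - 1) * ((norm (x t - z (t - 1)))\<^sup>2 + (norm (x (t - 1) - z (t - 1)))\<^sup>2)))
    \<le> potential y 0 - potential y T"
    by (rule sum_le_telescope) (rule potential_decrease[OF _ assms(9)])
  with potential_0_nonpos[OF assms(9)] neg_potential_le[of y] show ?thesis
    by (simp add: sum.distrib sum_divide_distrib sq_variation_def)
qed

end
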